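(* Let $\psi$ be any real-valued function of $r$ and $\varphi(s,r)=s+\psi(r)$. Fix $r>0$ and for $s>-\psi(r)$ put $$f(s,r)=\dfrac{1}{2\varphi(s,r)+2\,\mathop{K}\limits_{n=1}^{\infty}\left(\dfrac{n^2r^2}{\varphi(s,r)}\right)}.$$ Then $f(\cdot,r)$ is the unique solution of the functional equation $$f(s,r)+f(s+2r,r)=\frac{1}{\varphi(s,r)+r}\qquad(s>-\psi(r))$$ satisfying $\lim_{s\to\infty}f(s,r)=0$.
   Context: $\mathop{K}_{n=1}^{\infty}\left(\frac{a_n}{b}\right)$ denotes the continued fraction $\cfrac{a_1}{b+\cfrac{a_2}{b+\cdots}}$ (limit of convergents). *)

theory Defs
  imports Complex_Main
begin

fun cf_aux :: "(nat \<Rightarrow> real) \<Rightarrow> real \<Rightarrow> nat \<Rightarrow> nat \<Rightarrow> real" where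
  "cf_aux a b k 0 = 0"
| "cf_aux a b k (Suc m) = a k / (b + cf_aux a b (Suc k) m)"

definition cf_conv :: "(nat \<Rightarrow> real) \<Rightarrow> real \<Rightarrow> nat \<Rightarrow> real" where
  "cf_conv a b N = cf_aux a b 1 N"

definition cfK :: "(nat \<Rightarrow> real) \<Rightarrow> real \<Rightarrow> real" where
  "cfK a b = lim (cf_conv a b)"

definition phi :: "(real \<Rightarrow> real) \<Rightarrow> real \<Rightarrow> real \<Rightarrow> real" where
  "phi \<psi> s r = s + \<psi> r"

definition fcf :: "(real \<Rightarrow> real) \<Rightarrow> real \<Rightarrow> real \<Rightarrow> real" where
  "fcf \<psi> s r = 1 / (2 * phi \<psi> s r + 2 * cfK (\<lambda>n. (real n)^2 * r^2) (phi \<psi> s r))"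

end

(* The convergents of K(a_n/b) with a_n >= 0, b > 0 have positive denominators B_n, and consecutive
   convergents differ by (-1)^n (a_1 ... a_(n+1)) / (B_(n+1) B_n).  These gaps decrease, and for
   a_n = n^2 r^2 the bound B_n^2 >= c (n+1) (n! r^n)^2 makes their reciprocals grow like the harmonic
   series, so the Leibniz test gives convergence.

   For the functional equation put P_n = (x - (2n-1) r)/2 and Q_n = (x + (2n+1) r)/2.  Running the
   backward recursion of the tails of the fractions at x and at x + 2r simultaneously preserves
   (P_n + p) (Q_n + q) = (x + r)^2/4; at n = 1, in the limit, this reads
   (A - (x+r)/2) (B - (x+r)/2) = ((x+r)/2)^2 for A = x + K(x), B = x + 2r + K(x + 2r),
   i.e. 1/(2A) + 1/(2B) = 1/(x + r).  Finally f <= 1/(2 phi) tends to 0, and the difference of two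
   solutions is antiperiodic with period 2r and tends to 0, hence vanishes. *)

theory Submission
  imports Defs "HOL-Analysis.Harmonic_Numbers"
begin

fun cf_tail :: "(nat \<Rightarrow> real) \<Rightarrow> real \<Rightarrow> nat \<Rightarrow> nat \<Rightarrow> real \<Rightarrow> real" where
  "cf_tail a b k 0 w = w"
| "cf_tail a b k (Suc m) w = a k / (b + cf_tail a b (Suc k) m w)"

lemma cf_aux_eq_cf_tail: "cf_aux a b k m = cf_tail a b k m 0"
  by (induction m arbitrary: k) auto

lemma cf_tail_Suc_right: "cf_tail a b k (Suc m) w = cf_tail a b k m (a (k + m) / (b + w))"
  by (induction m arbitrary: k) auto

lemma cf_tail_nonneg:
  "(\<And>n. a n \<ge> 0) \<Longrightarrow> b > 0 \<Longrightarrow> w \<ge> 0 \<Longrightarrow> cf_tail a b k m w \<ge> 0"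
  by (induction m arbitrary: k) auto

lemma cf_conv_nonneg: "(\<And>n. a n \<ge> 0) \<Longrightarrow> b > 0 \<Longrightarrow> cf_conv a b n \<ge> 0"
  by (simp add: cf_conv_def cf_aux_eq_cf_tail cf_tail_nonneg)

fun cf_num :: "(nat \<Rightarrow> real) \<Rightarrow> real \<Rightarrow> nat \<Rightarrow> real" where
  "cf_num a b 0 = 0"
| "cf_num a b (Suc 0) = a 1"
| "cf_num a b (Suc (Suc n)) = b * cf_num a b (Suc n) + a (n + 2) * cf_num a b n"

fun cf_den :: "(nat \<Rightarrow> real) \<Rightarrow> real \<Rightarrow> nat \<Rightarrow> real" where
  "cf_den a b 0 = 1"
| "cf_den a b (Suc 0) = b"
| "cf_den a b (Suc (Suc n)) = b * cf_den a b (Suc n) + a (n + 2) * cf_den a b n"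

lemma cf_den_pos:
  assumes "\<And>n. a n \<ge> 0" and "b > 0"
  shows "cf_den a b n > 0"
  using assms by (induction a b n rule: cf_den.induct) (auto intro!: add_pos_nonneg)

lemma cf_tail_eq_num_den:
  assumes a: "\<And>n. a n \<ge> 0" and b: "b > 0" and "w \<ge> 0"
  shows "cf_tail a b 1 (Suc m) w
    = (cf_num a b (Suc m) + w * cf_num a b m) / (cf_den a b (Suc m) + w * cf_den a b m)"
  using \<open>w \<ge> 0\<close>
proof (induction m arbitrary: w)
  case 0
  then show ?case by simp
next
  case (Suc m)
  define v where "v = a (m + 2) / (b + w)"
  have bw: "b + w > 0" using Suc.prems b by simp
  have "v \<ge> 0" unfolding v_def using a bw by simp
  have "cf_tail a b 1 (Suc (Suc m)) w = cf_tail a b 1 (Suc m) v"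
    by (subst cf_tail_Suc_right) (simp add: v_def)
  also have "\<dots> = (cf_num a b (Suc m) + v * cf_num a b m) / (cf_den a b (Suc m) + v * cf_den a b m)"
    using Suc.IH \<open>v \<ge> 0\<close> by simp
  also have "\<dots> = ((b + w) * (cf_num a b (Suc m) + v * cf_num a b m))
      / ((b + w) * (cf_den a b (Suc m) + v * cf_den a b m))"
    using bw by simp
  also have "\<dots> = ((b + w) * cf_num a b (Suc m) + a (m + 2) * cf_num a b m)
      / ((b + w) * cf_den a b (Suc m) + a (m + 2) * cf_den a b m)"
    using bw by (simp add: v_def distrib_left flip: mult.assoc)
  also have "\<dots> = (cf_num a b (Suc (Suc m)) + w * cf_num a b (Suc m))
      / (cf_den a b (Suc (Suc m)) + w * cf_den a b (Suc m))"
    by (simp add: algebra_simps)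
  finally show ?case .
qed

lemma cf_conv_eq_num_den:
  assumes "\<And>n. a n \<ge> 0" and "b > 0"
  shows "cf_conv a b n = cf_num a b n / cf_den a b n"
proof (cases n)
  case (Suc m)
  then show ?thesis
    using cf_tail_eq_num_den[of a b 0 m, OF assms] by (simp add: cf_conv_def cf_aux_eq_cf_tail)
qed (simp add: cf_conv_def)

lemma cf_num_den_det:
  "cf_num a b (Suc n) * cf_den a b n - cf_num a b n * cf_den a b (Suc n)
    = (-1) ^ n * (\<Prod>k = 1..Suc n. a k)"
proof (induction n)
  case (Suc n)
  have "cf_num a b (Suc (Suc n)) * cf_den a b (Suc n) - cf_num a b (Suc n) * cf_den a b (Suc (Suc n))
      = - a (Suc (Suc n)) * (cf_num a b (Suc n) * cf_den a b n - cf_num a b n * cf_den a b (Suc n))"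
    by (simp add: algebra_simps)
  then show ?case
    using Suc.IH by simp
qed simp

lemma weighted_mean_dist_le:
  fixes p q u v L :: real
  assumes "p > 0" and "q \<ge> 0"
  shows "\<bar>(p * u + q * v) / (p + q) - L\<bar> \<le> max \<bar>u - L\<bar> \<bar>v - L\<bar>"
proof -
  have pq: "p + q > 0" using assms by simp
  have "\<bar>(p * u + q * v) / (p + q) - L\<bar> = \<bar>p * (u - L) + q * (v - L)\<bar> / (p + q)"
    using pq by (simp add: field_simps)
  also have "\<dots> \<le> (p * \<bar>u - L\<bar> + q * \<bar>v - L\<bar>) / (p + q)"
    using assms pq by (intro divide_right_mono) (auto simp: abs_mult intro: abs_triangle_ineq[THEN order_trans])
  also have "\<dots> \<le> ((p + q) * max \<bar>u - L\<bar> \<bar>v - L\<bar>) / (p + q)"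
    using assms pq by (intro divide_right_mono) (auto simp: distrib_right intro!: add_mono mult_left_mono)
  also have "\<dots> = max \<bar>u - L\<bar> \<bar>v - L\<bar>"
    using pq by simp
  finally show ?thesis .
qed

definition cf_gap :: "(nat \<Rightarrow> real) \<Rightarrow> real \<Rightarrow> nat \<Rightarrow> real" where
  "cf_gap a b n = (\<Prod>k = 1..Suc n. a k) / (cf_den a b (Suc n) * cf_den a b n)"

context
  fixes a :: "nat \<Rightarrow> real" and b :: real
  assumes a_nonneg: "\<And>n. a n \<ge> 0" and b_pos: "b > 0"
begin

lemma cf_conv_Suc_diff: "cf_conv a b (Suc n) - cf_conv a b n = (-1) ^ n * cf_gap a b n"
proof -
  have "cf_den a b n > 0" "cf_den a b (Suc n) > 0"
    using cf_den_pos a_nonneg b_pos by blast+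
  then have "cf_conv a b (Suc n) - cf_conv a b n
      = (cf_num a b (Suc n) * cf_den a b n - cf_num a b n * cf_den a b (Suc n))
        / (cf_den a b (Suc n) * cf_den a b n)"
    unfolding cf_conv_eq_num_den[OF a_nonneg b_pos] by (simp add: field_simps)
  then show ?thesis
    by (simp only: cf_num_den_det cf_gap_def times_divide_eq_right)
qed

lemma cf_conv_eq_sum: "cf_conv a b n = (\<Sum>i<n. (-1) ^ i * cf_gap a b i)"
  by (induction n) (simp_all add: cf_conv_def flip: cf_conv_Suc_diff)

lemma cf_gap_nonneg: "cf_gap a b n \<ge> 0"
  using cf_den_pos[of a b, OF a_nonneg b_pos] a_nonneg
  by (simp add: cf_gap_def prod_nonneg less_imp_le)

lemma cf_gap_Suc_le: "cf_gap a b (Suc n) \<le> cf_gap a b n"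
proof -
  define P where "P = (\<Prod>k = 1..Suc n. a k)"
  define D where "D k = cf_den a b k" for k
  have D: "D k > 0" for k
    unfolding D_def using cf_den_pos a_nonneg b_pos by blast
  have "P \<ge> 0" unfolding P_def using a_nonneg by (simp add: prod_nonneg)
  moreover have "a (n + 2) * D n \<le> D (n + 2)"
    using D[of "Suc n"] b_pos by (simp add: D_def)
  ultimately have "P * a (n + 2) * D n \<le> P * D (n + 2)"
    by (simp add: mult_left_mono mult.assoc)
  then have "P * a (n + 2) / (D (n + 2) * D (n + 1)) \<le> P / (D (n + 1) * D n)"
    using D[of n] D[of "n + 1"] D[of "n + 2"] by (simp add: field_simps)
  moreover have "(\<Prod>k = 1..Suc (Suc n). a k) = P * a (n + 2)"
    by (simp add: P_def)
  ultimately show ?thesis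
    by (simp add: cf_gap_def D_def P_def)
qed

lemma cf_conv_convergent:
  assumes "cf_gap a b \<longlonglongrightarrow> 0"
  shows "convergent (cf_conv a b)"
proof -
  have "summable (\<lambda>n. (-1) ^ n * cf_gap a b n)"
    by (rule summable_Leibniz'(1)[of "cf_gap a b", OF assms cf_gap_nonneg cf_gap_Suc_le])
  then show ?thesis
    unfolding cf_conv_eq_sum by (simp add: summable_iff_convergent)
qed

lemma cfK_nonneg: "convergent (cf_conv a b) \<Longrightarrow> cfK a b \<ge> 0"
  unfolding cfK_def convergent_LIMSEQ_iff
  by (rule LIMSEQ_le_const) (auto intro: cf_conv_nonneg a_nonneg b_pos)

lemma inverse_cf_gap_Suc:
  assumes a_pos: "\<And>k. k > 0 \<Longrightarrow> a k > 0"
  shows "inverse (cf_gap a b (Suc n))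
    = inverse (cf_gap a b n) + b * cf_den a b (Suc n) ^ 2 / (\<Prod>k = 1..n + 2. a k)"
proof -
  define P where "P = (\<Prod>k = 1..Suc n. a k)"
  have "P > 0" unfolding P_def using a_pos by (intro prod_pos) auto
  moreover have "a (n + 2) > 0" using a_pos by simp
  moreover have "(\<Prod>k = 1..n + 2. a k) = P * a (n + 2)"
    by (simp add: P_def)
  ultimately show ?thesis
    by (simp add: cf_gap_def flip: P_def) (simp add: field_simps power2_eq_square)
qed

lemma cf_tail_tendsto_cfK:
  assumes conv: "convergent (cf_conv a b)" and w: "eventually (\<lambda>m. w m \<ge> 0) sequentially"
  shows "(\<lambda>m. cf_tail a b 1 (Suc m) (w m)) \<longlonglongrightarrow> cfK a b"
proof -
  let ?S = "cf_conv a b" and ?L = "cfK a b"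
  have S: "?S \<longlonglongrightarrow> ?L"
    using conv by (simp add: cfK_def convergent_LIMSEQ_iff)
  have "(\<lambda>m. max \<bar>?S (Suc m) - ?L\<bar> \<bar>?S m - ?L\<bar>) \<longlonglongrightarrow> max \<bar>?L - ?L\<bar> \<bar>?L - ?L\<bar>"
    by (intro tendsto_intros LIMSEQ_Suc S)
  then have bound: "(\<lambda>m. max \<bar>?S (Suc m) - ?L\<bar> \<bar>?S m - ?L\<bar>) \<longlonglongrightarrow> 0"
    by simp
  have "eventually (\<lambda>m. norm (cf_tail a b 1 (Suc m) (w m) - ?L)
      \<le> max \<bar>?S (Suc m) - ?L\<bar> \<bar>?S m - ?L\<bar>) sequentially"
    using w
  proof eventually_elim
    case (elim m)
    have D: "cf_den a b k > 0" for k
      using cf_den_pos a_nonneg b_pos by blast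
    have num: "cf_num a b k = cf_den a b k * ?S k" for k
      using D[of k] by (simp add: cf_conv_eq_num_den[OF a_nonneg b_pos])
    have "cf_tail a b 1 (Suc m) (w m) = (cf_den a b (Suc m) * ?S (Suc m) + (w m * cf_den a b m) * ?S m)
        / (cf_den a b (Suc m) + w m * cf_den a b m)"
      unfolding cf_tail_eq_num_den[OF a_nonneg b_pos elim] num by (simp add: mult.assoc)
    moreover have "w m * cf_den a b m \<ge> 0"
      using elim D[of m] by simp
    ultimately show ?case
      using weighted_mean_dist_le[OF D[of "Suc m"]] by simp
  qed
  then have "(\<lambda>m. cf_tail a b 1 (Suc m) (w m) - ?L) \<longlonglongrightarrow> 0"
    by (rule Lim_null_comparison[OF _ bound])
  then show ?thesis
    by (simp add: LIM_zero_iff)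
qed

end

definition sq_numerators :: "real \<Rightarrow> nat \<Rightarrow> real" where
  "sq_numerators r = (\<lambda>n. (real n)\<^sup>2 * r\<^sup>2)"

lemma sq_numerators_nonneg: "sq_numerators r n \<ge> 0"
  by (simp add: sq_numerators_def)

lemma prod_sq_numerators: "(\<Prod>k = 1..n. sq_numerators r k) = (fact n * r ^ n)\<^sup>2"
  by (induction n) (simp_all add: sq_numerators_def power_mult_distrib)

context
  fixes r x :: real
  assumes r: "r > 0" and x: "x > 0"
begin

lemma cf_den_sq_numerators_lower:
  "min 1 (x\<^sup>2 / (2 * r\<^sup>2)) * (real m + 1) * (fact m * r ^ m)\<^sup>2 \<le> cf_den (sq_numerators r) x m ^ 2"
proof (induction m rule: induct_nat_012)
  case 0
  then show ?case by simp
next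
  case 1
  have "min 1 (x\<^sup>2 / (2 * r\<^sup>2)) * 2 * r\<^sup>2 \<le> x\<^sup>2 / (2 * r\<^sup>2) * 2 * r\<^sup>2"
    using r by (intro mult_right_mono) auto
  then show ?case using r by simp
next
  case (ge2 m)
  define c where "c = min 1 (x\<^sup>2 / (2 * r\<^sup>2))"
  define F where "F = (fact m * r ^ m)\<^sup>2"
  let ?B = "cf_den (sq_numerators r) x"
  have "c \<ge> 0" "F \<ge> 0" by (simp_all add: c_def F_def)
  have B: "?B k > 0" for k
    using cf_den_pos sq_numerators_nonneg x by blast
  have "(real m + 2)\<^sup>2 * r\<^sup>2 * ?B m \<le> ?B (Suc (Suc m))"
    using B[of "Suc m"] x by (simp add: sq_numerators_def add.commute)
  then have rec: "((real m + 2)\<^sup>2 * r\<^sup>2 * ?B m)\<^sup>2 \<le> ?B (Suc (Suc m)) ^ 2"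
    using B[of m] r by (intro power_mono) auto
  have "c * (real (Suc (Suc m)) + 1) * (fact (Suc (Suc m)) * r ^ Suc (Suc m))\<^sup>2
      = (c * (real m + 1) * (real m + 2)\<^sup>2 * r ^ 4 * F) * ((real m + 1) * (real m + 3))"
    by (simp add: F_def power2_eq_square eval_nat_numeral algebra_simps)
  also have "\<dots> \<le> (c * (real m + 1) * (real m + 2)\<^sup>2 * r ^ 4 * F) * (real m + 2)\<^sup>2"
    using \<open>c \<ge> 0\<close> \<open>F \<ge> 0\<close> by (intro mult_left_mono) (simp_all add: power2_eq_square algebra_simps)
  also have "\<dots> = ((real m + 2)\<^sup>2 * r\<^sup>2)\<^sup>2 * (c * (real m + 1) * F)"
    by (simp add: power2_eq_square eval_nat_numeral algebra_simps)
  also have "\<dots> \<le> ((real m + 2)\<^sup>2 * r\<^sup>2)\<^sup>2 * ?B m ^ 2"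
    using ge2.IH(1) by (intro mult_left_mono) (simp_all add: c_def F_def)
  also have "\<dots> \<le> ?B (Suc (Suc m)) ^ 2"
    using rec by (simp add: power_mult_distrib)
  finally show ?case by (simp add: c_def)
qed

lemma inverse_cf_gap_sq_numerators_lower:
  "x * min 1 (x\<^sup>2 / (2 * r\<^sup>2)) / r\<^sup>2 * (harm (Suc n) - 1)
    \<le> inverse (cf_gap (sq_numerators r) x n)"
proof (induction n)
  case 0
  then show ?case
    using r x by (simp add: cf_gap_def sq_numerators_def harm_altdef)
next
  case (Suc n)
  define c where "c = min 1 (x\<^sup>2 / (2 * r\<^sup>2))"
  define K where "K = x * c / r\<^sup>2"
  define F where "F = (fact (Suc n) * r ^ Suc n)\<^sup>2"
  let ?B = "cf_den (sq_numerators r) x (Suc n)"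
  have "F > 0" using r by (simp add: F_def)
  have "real n + 2 > 0" by simp
  then have "K * inverse (real n + 2) = x * (c * (real n + 2) * F) / ((real n + 2)\<^sup>2 * r\<^sup>2 * F)"
    using \<open>F > 0\<close> r by (simp add: K_def power2_eq_square divide_simps)
  also have "\<dots> \<le> x * ?B\<^sup>2 / ((real n + 2)\<^sup>2 * r\<^sup>2 * F)"
    using cf_den_sq_numerators_lower[of "Suc n"] x r \<open>F > 0\<close>
    by (intro divide_right_mono mult_left_mono) (simp_all add: c_def F_def add.commute)
  also have "\<dots> = x * ?B\<^sup>2 / (\<Prod>k = 1..n + 2. sq_numerators r k)"
  proof -
    have "fact (n + 2) * r ^ (n + 2) = ((real n + 2) * r) * (fact (Suc n) * r ^ Suc n)"
      by (simp add: algebra_simps)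
    then show ?thesis
      by (subst prod_sq_numerators) (simp add: F_def power_mult_distrib)
  qed
  finally have step: "K * inverse (real n + 2) \<le> x * ?B\<^sup>2 / (\<Prod>k = 1..n + 2. sq_numerators r k)" .
  have "K * (harm (Suc (Suc n)) - 1) = K * (harm (Suc n) - 1) + K * inverse (real n + 2)"
    by (simp add: harm_Suc[of "Suc n"] algebra_simps)
  also have "\<dots> \<le> inverse (cf_gap (sq_numerators r) x n) + x * ?B\<^sup>2 / (\<Prod>k = 1..n + 2. sq_numerators r k)"
    using Suc.IH step by (intro add_mono) (simp_all add: K_def c_def)
  also have "\<dots> = inverse (cf_gap (sq_numerators r) x (Suc n))"
    using r by (intro inverse_cf_gap_Suc[OF sq_numerators_nonneg x, symmetric]) (simp add: sq_numerators_def)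
  finally show ?case by (simp add: K_def c_def)
qed

lemma cf_gap_sq_numerators_tendsto_0: "cf_gap (sq_numerators r) x \<longlonglongrightarrow> 0"
proof -
  define K where "K = x * min 1 (x\<^sup>2 / (2 * r\<^sup>2)) / r\<^sup>2"
  have "K > 0" using r x by (simp add: K_def)
  have "filterlim (\<lambda>n. harm (Suc n) :: real) at_top sequentially"
    using harm_at_top by (simp add: filterlim_sequentially_Suc)
  then have "filterlim (\<lambda>n. K * (-1 + harm (Suc n))) at_top sequentially"
    by (intro filterlim_tendsto_pos_mult_at_top[OF tendsto_const \<open>K > 0\<close>]
        filterlim_tendsto_add_at_top[OF tendsto_const])
  then have "filterlim (\<lambda>n. inverse (cf_gap (sq_numerators r) x n)) at_top sequentially"
    by (rule filterlim_at_top_mono)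
      (use inverse_cf_gap_sq_numerators_lower in \<open>simp add: K_def always_eventually\<close>)
  then show ?thesis
    using tendsto_inverse_0_at_top by fastforce
qed

lemma convergent_cf_conv_sq_numerators: "convergent (cf_conv (sq_numerators r) x)"
  using cf_conv_convergent[OF sq_numerators_nonneg x cf_gap_sq_numerators_tendsto_0] .

lemma cfK_sq_numerators_nonneg: "cfK (sq_numerators r) x \<ge> 0"
  by (rule cfK_nonneg[OF sq_numerators_nonneg x convergent_cf_conv_sq_numerators])

end

lemma product_identity_step:
  fixes P Q U V a :: real
  assumes "(U - Q) * (V - P) = P * Q + a" and "U \<noteq> 0" and "V \<noteq> 0"
  shows "(P + a / U) * (Q + a / V) = P * Q + a"
proof -
  have "(P * U + a) * (Q * V + a) = (P * Q + a) * (U * V)"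
    using assms(1) by algebra
  then show ?thesis
    using assms(2,3) by (simp add: field_simps)
qed

definition tails_invariant :: "real \<Rightarrow> real \<Rightarrow> nat \<Rightarrow> real \<Rightarrow> real \<Rightarrow> bool" where
  "tails_invariant r x n p q \<longleftrightarrow>
    ((x - (2 * real n - 1) * r) / 2 + p) * ((x + (2 * real n + 1) * r) / 2 + q) = (x + r)\<^sup>2 / 4"

lemma tails_invariant_step:
  assumes "tails_invariant r x (Suc k) v w" and "x + v \<noteq> 0" and "x + 2 * r + w \<noteq> 0"
  shows "tails_invariant r x k (sq_numerators r k / (x + v)) (sq_numerators r k / (x + 2 * r + w))"
proof -
  let ?P = "(x - (2 * real k - 1) * r) / 2" and ?Q = "(x + (2 * real k + 1) * r) / 2"
  have PQ: "?P * ?Q + sq_numerators r k = (x + r)\<^sup>2 / 4"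
    by (simp add: sq_numerators_def power2_eq_square field_simps)
  have "(x + v) - ?Q = (x - (2 * real (Suc k) - 1) * r) / 2 + v"
    and "(x + 2 * r + w) - ?P = (x + (2 * real (Suc k) + 1) * r) / 2 + w"
    by (simp_all add: field_simps)
  then have "((x + v) - ?Q) * ((x + 2 * r + w) - ?P) = ?P * ?Q + sq_numerators r k"
    using assms(1) unfolding PQ tails_invariant_def by (simp only:)
  from product_identity_step[OF this assms(2,3)] show ?thesis
    unfolding tails_invariant_def PQ .
qed

context
  fixes r x :: real
  assumes r: "r > 0" and x: "x > 0"
begin

lemma tails_invariant_cf_tail:
  "tails_invariant r x (k + m) v w \<Longrightarrow> v \<ge> 0 \<Longrightarrow> w \<ge> 0 \<Longrightarrow>
    tails_invariant r x k (cf_tail (sq_numerators r) x k m v) (cf_tail (sq_numerators r) (x + 2 * r) k m w)"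
proof (induction m arbitrary: k)
  case (Suc m)
  have "tails_invariant r x (Suc k) (cf_tail (sq_numerators r) x (Suc k) m v)
      (cf_tail (sq_numerators r) (x + 2 * r) (Suc k) m w)"
    using Suc by simp
  moreover have "cf_tail (sq_numerators r) x (Suc k) m v \<ge> 0"
    using cf_tail_nonneg sq_numerators_nonneg x Suc.prems by blast
  moreover have "cf_tail (sq_numerators r) (x + 2 * r) (Suc k) m w \<ge> 0"
    using cf_tail_nonneg[of "sq_numerators r" "x + 2 * r"] sq_numerators_nonneg x r Suc.prems by simp
  ultimately show ?case
    using x r by (simp add: tails_invariant_step)
qed simp

lemma cfK_sq_numerators_shift_identity:
  "((x - r) / 2 + cfK (sq_numerators r) x) * ((x + 3 * r) / 2 + cfK (sq_numerators r) (x + 2 * r))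
    = (x + r)\<^sup>2 / 4"
proof -
  have y: "x + 2 * r > 0" using r x by simp
  \<comment> \<open>the tail value that makes the invariant hold at level m + 2 against the tail 0 at x + 2r\<close>
  define w where "w m = (x + r)\<^sup>2 / (2 * (x + (2 * real (m + 2) + 1) * r)) - (x - (2 * real (m + 2) - 1) * r) / 2"
    for m
  have w_nonneg: "eventually (\<lambda>m. w m \<ge> 0) sequentially"
  proof -
    obtain N :: nat where "x / r < real N"
      using reals_Archimedean2 by blast
    have "x \<le> (2 * real (m + 2) - 1) * r" if "m \<ge> N" for m
    proof -
      have "x \<le> real N * r" using \<open>x / r < real N\<close> r by (simp add: field_simps)
      also have "\<dots> \<le> (2 * real (m + 2) - 1) * r" using that r by (intro mult_right_mono) auto
      finally show ?thesis .
    qed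
    moreover have "(x + r)\<^sup>2 / (2 * (x + (2 * real (m + 2) + 1) * r)) \<ge> 0" for m
      using r x by simp
    ultimately have "w m \<ge> 0" if "m \<ge> N" for m
      unfolding w_def using that by (smt (verit) divide_nonpos_pos)
    then show ?thesis
      unfolding eventually_sequentially by blast
  qed
  have inv: "tails_invariant r x 1 (cf_tail (sq_numerators r) x 1 (Suc m) (w m))
      (cf_tail (sq_numerators r) (x + 2 * r) 1 (Suc m) 0)" if "w m \<ge> 0" for m
  proof (rule tails_invariant_cf_tail[OF _ that order_refl])
    have "x + (2 * real (m + 2) + 1) * r > 0" using r x by (simp add: add_pos_pos)
    then show "tails_invariant r x (1 + Suc m) (w m) 0"
      by (simp add: tails_invariant_def w_def field_simps power2_eq_square)
  qed
  let ?Kx = "cfK (sq_numerators r) x" and ?Ky = "cfK (sq_numerators r) (x + 2 * r)"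
  let ?f = "\<lambda>m. ((x - r) / 2 + cf_tail (sq_numerators r) x 1 (Suc m) (w m))
    * ((x + 3 * r) / 2 + cf_conv (sq_numerators r) (x + 2 * r) (Suc m))"
  have lim: "?f \<longlonglongrightarrow> ((x - r) / 2 + ?Kx) * ((x + 3 * r) / 2 + ?Ky)"
  proof (intro tendsto_intros)
    show "(\<lambda>m. cf_tail (sq_numerators r) x 1 (Suc m) (w m)) \<longlonglongrightarrow> ?Kx"
      by (rule cf_tail_tendsto_cfK[OF sq_numerators_nonneg x convergent_cf_conv_sq_numerators[OF r x] w_nonneg])
    show "(\<lambda>m. cf_conv (sq_numerators r) (x + 2 * r) (Suc m)) \<longlonglongrightarrow> ?Ky"
      using convergent_cf_conv_sq_numerators[OF r y]
      by (simp add: cfK_def convergent_LIMSEQ_iff LIMSEQ_Suc)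
  qed
  have "eventually (\<lambda>m. ?f m = (x + r)\<^sup>2 / 4) sequentially"
    using w_nonneg by eventually_elim
      (use inv in \<open>simp add: tails_invariant_def cf_conv_def cf_aux_eq_cf_tail\<close>)
  then have "?f \<longlonglongrightarrow> (x + r)\<^sup>2 / 4"
    by (rule tendsto_eventually)
  with lim show ?thesis
    by (rule LIMSEQ_unique)
qed

end

lemma cfK_sq_numerators_reciprocal_sum:
  assumes r: "r > 0" and x: "x > 0"
  shows "1 / (2 * x + 2 * cfK (sq_numerators r) x)
    + 1 / (2 * (x + 2 * r) + 2 * cfK (sq_numerators r) (x + 2 * r)) = 1 / (x + r)"
proof -
  define A where "A = x + cfK (sq_numerators r) x"
  define B where "B = x + 2 * r + cfK (sq_numerators r) (x + 2 * r)"
  have "A > 0" "B > 0" "x + r > 0"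
    using r x cfK_sq_numerators_nonneg[OF r x] cfK_sq_numerators_nonneg[of r "x + 2 * r"]
    by (simp_all add: A_def B_def)
  have "(A - (x + r) / 2) * (B - (x + r) / 2) = (x + r)\<^sup>2 / 4"
    using cfK_sq_numerators_shift_identity[OF r x] by (simp add: A_def B_def field_simps)
  then have AB: "2 * A * B = (x + r) * (A + B)"
    by (simp add: field_simps power2_eq_square)
  have "1 / (2 * A) + 1 / (2 * B) = (A + B) / (2 * A * B)"
    using \<open>A > 0\<close> \<open>B > 0\<close> by (simp add: field_simps)
  also have "\<dots> = 1 / (x + r)"
    using \<open>A > 0\<close> \<open>B > 0\<close> unfolding AB by simp
  finally show ?thesis
    by (simp add: A_def B_def algebra_simps)
qed

lemma antiperiodic_tendsto_0_imp_zero: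
  fixes h :: "real \<Rightarrow> real"
  assumes "d > 0" and anti: "\<And>s. s > s0 \<Longrightarrow> h (s + d) = - h s"
    and h: "(h \<longlongrightarrow> 0) at_top" and "s > s0"
  shows "h s = 0"
proof -
  have orbit: "h (s + d * real k) = (-1) ^ k * h s" for k
  proof (induction k)
    case (Suc k)
    have "s + d * real k > s0"
      using \<open>d > 0\<close> \<open>s > s0\<close> by (simp add: add_pos_nonneg add.commute less_le_trans)
    then show ?case
      using anti[of "s + d * real k"] Suc.IH by (simp add: algebra_simps)
  qed simp
  have "filterlim (\<lambda>k. s + d * real k) at_top sequentially"
    by (intro filterlim_tendsto_add_at_top[OF tendsto_const]
        filterlim_tendsto_pos_mult_at_top[OF tendsto_const \<open>d > 0\<close> filterlim_real_sequentially])
  then have "(\<lambda>k. \<bar>h (s + d * real k)\<bar>) \<longlonglongrightarrow> 0"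
    by (intro tendsto_rabs_zero filterlim_compose[OF h])
  then have "(\<lambda>k. \<bar>h s\<bar>) \<longlonglongrightarrow> 0"
    by (simp add: orbit abs_mult)
  then show ?thesis
    by (simp add: LIMSEQ_const_iff)
qed

lemma fcf_eq_cfK_sq_numerators:
  "fcf \<psi> s r = 1 / (2 * phi \<psi> s r + 2 * cfK (sq_numerators r) (phi \<psi> s r))"
  by (simp add: fcf_def sq_numerators_def)

lemma fcf_tendsto_0:
  assumes r: "r > 0"
  shows "((\<lambda>s. fcf \<psi> s r) \<longlongrightarrow> 0) at_top"
proof (rule Lim_null_comparison)
  show "eventually (\<lambda>s. norm (fcf \<psi> s r) \<le> inverse (2 * (\<psi> r + s))) at_top"
    using eventually_gt_at_top[of "- \<psi> r"]
  proof eventually_elim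
    case (elim s)
    then have "phi \<psi> s r > 0" by (simp add: phi_def)
    with cfK_sq_numerators_nonneg[OF r this] show ?case
      by (simp add: fcf_eq_cfK_sq_numerators phi_def frac_le divide_inverse add.commute)
  qed
  have "filterlim (\<lambda>s. \<psi> r + s) at_top at_top"
    by (rule filterlim_tendsto_add_at_top[OF tendsto_const filterlim_ident])
  from filterlim_tendsto_pos_mult_at_top[OF tendsto_const _ this, of 2]
  have "filterlim (\<lambda>s. 2 * (\<psi> r + s)) at_top at_top"
    by simp
  then show "((\<lambda>s. inverse (2 * (\<psi> r + s))) \<longlongrightarrow> 0) at_top"
    by (rule tendsto_inverse_0_at_top)
qed

theorem theorem8:
  fixes \<psi> :: "real \<Rightarrow> real" and r :: real
  assumes "r > 0"
  shows "(\<forall>s. s > - \<psi> r \<longrightarrow> convergent (cf_conv (\<lambda>n. (real n)^2 * r^2) (phi \<psi> s r)))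
    \<and> (\<forall>s. s > - \<psi> r \<longrightarrow> fcf \<psi> s r + fcf \<psi> (s + 2*r) r = 1 / (phi \<psi> s r + r))
    \<and> ((\<lambda>s. fcf \<psi> s r) \<longlongrightarrow> 0) at_top
    \<and> (\<forall>g :: real \<Rightarrow> real.
         (\<forall>s. s > - \<psi> r \<longrightarrow> g s + g (s + 2*r) = 1 / (phi \<psi> s r + r))
         \<and> (g \<longlongrightarrow> 0) at_top
         \<longrightarrow> (\<forall>s. s > - \<psi> r \<longrightarrow> g s = fcf \<psi> s r))"
proof -
  have phi_pos: "phi \<psi> s r > 0" if "s > - \<psi> r" for s
    using that by (simp add: phi_def)
  have conv: "convergent (cf_conv (\<lambda>n. (real n)^2 * r^2) (phi \<psi> s r))" if "s > - \<psi> r" for s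
    using convergent_cf_conv_sq_numerators[OF assms phi_pos[OF that]] by (simp add: sq_numerators_def)
  have sum: "fcf \<psi> s r + fcf \<psi> (s + 2*r) r = 1 / (phi \<psi> s r + r)" if "s > - \<psi> r" for s
    using cfK_sq_numerators_reciprocal_sum[OF assms phi_pos[OF that]]
    by (simp add: fcf_eq_cfK_sq_numerators phi_def algebra_simps)
  have unique: "g s = fcf \<psi> s r"
    if g: "\<forall>s. s > - \<psi> r \<longrightarrow> g s + g (s + 2*r) = 1 / (phi \<psi> s r + r)" "(g \<longlongrightarrow> 0) at_top"
      and "s > - \<psi> r" for g s
  proof -
    have "g s - fcf \<psi> s r = 0"
    proof (rule antiperiodic_tendsto_0_imp_zero[OF _ _ _ \<open>s > - \<psi> r\<close>])
      show "2 * r > 0" using assms by simp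
      show "g (t + 2 * r) - fcf \<psi> (t + 2 * r) r = - (g t - fcf \<psi> t r)" if "t > - \<psi> r" for t
        using g(1) sum[OF that] that by fastforce
      show "((\<lambda>t. g t - fcf \<psi> t r) \<longlongrightarrow> 0) at_top"
        using tendsto_diff[OF g(2) fcf_tendsto_0[OF assms]] by simp
    qed
    then show ?thesis by simp
  qed
  show ?thesis
    using conv sum fcf_tendsto_0[OF assms] unique by blast
qed

end
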